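(* Let $n\ge 2$ and consider Tower of Hanoi on three pegs with $n$ disks, starting from the initial position (all $n$ disks on Peg 1). For every position $P$ of the $n$ disks on the three pegs, there is a finite sequence of legal moves of odd length, in which no two consecutive moves move the same disk, that transforms the initial position into $P$. Equivalently, in the two-player setting described in the context (players alternating, a player may not move the disk just moved by the opponent), the first player can force play to reach any position $P$ after an odd number of moves.
   Context: Tower of Hanoi on three pegs (labeled 1, 2, 3) with $n$ disks of pairwise distinct sizes: a position is an assignment of each disk to a peg, the disks on each peg being stacked with sizes decreasing from bottom to top. A legal move transfers the top disk of one peg to a different peg that is empty or whose top disk is larger. Here, sequences of legal moves are considered without any restriction on intermediate positions (in particular, intermediate positions may have all disks on one peg), except that no disk may be moved in two consecutive moves. *)

theory Defs
  imports Main
begin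

text \<open>A position of n disks is a list of length n; entry i is the peg (1, 2 or 3)
  of disk i. Disks are ordered by size: disk i is smaller than disk j iff i < j.\<close>

definition hanoi_pos :: "nat \<Rightarrow> nat list \<Rightarrow> bool" where
  "hanoi_pos n s \<longleftrightarrow> length s = n \<and> set s \<subseteq> {1, 2, 3}"

definition initial_pos :: "nat \<Rightarrow> nat list" where
  "initial_pos n = replicate n 1"

definition legal_move :: "nat list \<Rightarrow> nat \<Rightarrow> nat \<Rightarrow> bool" where
  "legal_move s d q \<longleftrightarrow> d < length s \<and> q \<in> {1, 2, 3} \<and> q \<noteq> s ! d
     \<and> (\<forall>d'<d. s ! d' \<noteq> s ! d) \<and> (\<forall>d'<d. s ! d' \<noteq> q)"

definition do_move :: "nat list \<Rightarrow> nat \<times> nat \<Rightarrow> nat list" where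
  "do_move s m = s[fst m := snd m]"

fun legal_seq :: "nat list \<Rightarrow> (nat \<times> nat) list \<Rightarrow> bool" where
  "legal_seq s [] = True"
| "legal_seq s (m # ms) = (legal_move s (fst m) (snd m) \<and> legal_seq (do_move s m) ms)"

definition apply_seq :: "nat list \<Rightarrow> (nat \<times> nat) list \<Rightarrow> nat list" where
  "apply_seq s ms = foldl do_move s ms"

definition no_consecutive_same_disk :: "(nat \<times> nat) list \<Rightarrow> bool" where
  "no_consecutive_same_disk ms \<longleftrightarrow>
     (\<forall>i. Suc i < length ms \<longrightarrow> fst (ms ! i) \<noteq> fst (ms ! Suc i))"

end

theory Submission
  imports Defs
begin

text \<open>Induction on the number of disks, starting at two. To reach P from the tower on peg c,
  look at the largest disk. If P leaves it on c, it is never moved and an odd walk of the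
  smaller disks does the job. Otherwise transfer the smaller disks to the third peg by the
  classical 2^(n-1) - 1 moves, move the largest disk to its target and finish with an odd walk
  of the smaller disks from the new tower: the total length 2^(n-1) + odd is odd, and the single
  move of the largest disk separates two runs that only move smaller disks.\<close>

definition odd_walk :: "nat list \<Rightarrow> (nat \<times> nat) list \<Rightarrow> nat list \<Rightarrow> bool" where
  "odd_walk s ms t \<longleftrightarrow> odd (length ms) \<and> legal_seq s ms \<and> no_consecutive_same_disk ms
     \<and> apply_seq s ms = t"

lemma apply_seq_Nil [simp]: "apply_seq s [] = s"
  and apply_seq_Cons [simp]: "apply_seq s (m # ms) = apply_seq (do_move s m) ms"
  by (simp_all add: apply_seq_def)

lemma apply_seq_append: "apply_seq s (xs @ ys) = apply_seq (apply_seq s xs) ys"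
  by (simp add: apply_seq_def)

lemma legal_seq_append:
  "legal_seq s (xs @ ys) \<longleftrightarrow> legal_seq s xs \<and> legal_seq (apply_seq s xs) ys"
  by (induction xs arbitrary: s) auto

lemma legal_seq_disk_less: "legal_seq s ms \<Longrightarrow> m \<in> set ms \<Longrightarrow> fst m < length s"
proof (induction ms arbitrary: s)
  case (Cons m' ms)
  have "length (do_move s m') = length s" by (simp add: do_move_def)
  then show ?case using Cons.prems Cons.IH[of "do_move s m'"] by (auto simp: legal_move_def)
qed simp

lemma legal_move_append:
  "d < length s \<Longrightarrow> legal_move (s @ t) d q \<longleftrightarrow> legal_move s d q"
  unfolding legal_move_def by (auto simp: nth_append)

lemma legal_seq_extend:
  "legal_seq s ms \<Longrightarrow> legal_seq (s @ t) ms \<and> apply_seq (s @ t) ms = apply_seq s ms @ t"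
proof (induction ms arbitrary: s)
  case (Cons m ms)
  then have "fst m < length s" by (simp add: legal_move_def)
  moreover from this have "do_move (s @ t) m = do_move s m @ t"
    by (simp add: do_move_def list_update_append)
  ultimately show ?case using Cons by (simp add: legal_move_append)
qed simp

lemma no_consecutive_same_disk_iff:
  "no_consecutive_same_disk ms \<longleftrightarrow> distinct_adj (map fst ms)"
  by (simp add: no_consecutive_same_disk_def distinct_adj_conv_nth)

lemma no_consecutive_same_disk_around_larger:
  assumes "no_consecutive_same_disk xs" "no_consecutive_same_disk ys"
    and "\<forall>m \<in> set xs. fst m < d" "\<forall>m \<in> set ys. fst m < d"
  shows "no_consecutive_same_disk (xs @ (d, q) # ys)"
  using assms by (auto simp: no_consecutive_same_disk_iff distinct_adj_append_iff distinct_adj_Cons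
      last_map hd_map)

definition third_peg :: "nat \<Rightarrow> nat \<Rightarrow> nat" where
  "third_peg a b = 6 - a - b"

lemma third_peg:
  assumes "a \<in> {1, 2, 3}" "b \<in> {1, 2, 3}" "a \<noteq> b"
  shows "third_peg a b \<in> {1, 2, 3}" "third_peg a b \<noteq> a" "third_peg a b \<noteq> b"
  using assms by (auto simp: third_peg_def)

fun tower_moves :: "nat \<Rightarrow> nat \<Rightarrow> nat \<Rightarrow> (nat \<times> nat) list" where
  "tower_moves 0 a b = []"
| "tower_moves (Suc k) a b =
     tower_moves k a (third_peg a b) @ (k, b) # tower_moves k (third_peg a b) b"

lemma length_tower_moves: "length (tower_moves k a b) + 1 = 2 ^ k"
  by (induction k arbitrary: a b) auto

lemma tower_moves_disk_less: "m \<in> set (tower_moves k a b) \<Longrightarrow> fst m < k"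
  by (induction k arbitrary: a b) fastforce+

lemma no_consecutive_same_disk_tower_moves: "no_consecutive_same_disk (tower_moves k a b)"
proof (induction k arbitrary: a b)
  case 0 then show ?case by (simp add: no_consecutive_same_disk_def)
next
  case (Suc k) then show ?case
    by (simp add: no_consecutive_same_disk_around_larger tower_moves_disk_less)
qed

lemma legal_seq_tower_moves:
  assumes "a \<in> {1, 2, 3}" "b \<in> {1, 2, 3}" "a \<noteq> b"
  shows "legal_seq (replicate k a) (tower_moves k a b)
    \<and> apply_seq (replicate k a) (tower_moves k a b) = replicate k b"
  using assms
proof (induction k arbitrary: a b)
  case (Suc k)
  define c where "c = third_peg a b"
  have c: "c \<in> {1, 2, 3}" "c \<noteq> a" "c \<noteq> b"
    using third_peg Suc.prems unfolding c_def by auto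
  have first: "legal_seq (replicate k a @ [a]) (tower_moves k a c)
      \<and> apply_seq (replicate k a @ [a]) (tower_moves k a c) = replicate k c @ [a]"
    using legal_seq_extend Suc.IH[of a c] Suc.prems c by simp
  have last: "legal_seq (replicate k c @ [b]) (tower_moves k c b)
      \<and> apply_seq (replicate k c @ [b]) (tower_moves k c b) = replicate k b @ [b]"
    using legal_seq_extend Suc.IH[of c b] Suc.prems c by simp
  have "legal_move (replicate k c @ [a]) k b"
    using Suc.prems c by (auto simp: legal_move_def nth_append)
  moreover have "do_move (replicate k c @ [a]) (k, b) = replicate k c @ [b]"
    by (simp add: do_move_def list_update_append)
  ultimately show ?case using first last
    by (simp add: replicate_append_same[symmetric] legal_seq_append apply_seq_append
        c_def[symmetric])
qed simp

lemma odd_walk_extend: "odd_walk s ms t \<Longrightarrow> odd_walk (s @ u) ms (t @ u)"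
  using legal_seq_extend by (simp add: odd_walk_def)

lemma odd_walk_via_third_peg:
  assumes "0 < m" "b \<in> {1, 2, 3}" "c \<in> {1, 2, 3}" "b \<noteq> c"
    and walk: "odd_walk (replicate m (third_peg c b)) ms P"
  shows "odd_walk (replicate m c @ [c]) (tower_moves m c (third_peg c b) @ (m, b) # ms) (P @ [b])"
proof -
  define e where "e = third_peg c b"
  have e: "e \<in> {1, 2, 3}" "e \<noteq> b" "e \<noteq> c"
    using third_peg assms(2-4) unfolding e_def by auto
  have transfer: "legal_seq (replicate m c @ [c]) (tower_moves m c e)
      \<and> apply_seq (replicate m c @ [c]) (tower_moves m c e) = replicate m e @ [c]"
    using legal_seq_extend legal_seq_tower_moves[of c e m] assms(3) e by simp
  from walk have walk: "odd_walk (replicate m e) ms P" by (simp add: e_def)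
  then have rest: "legal_seq (replicate m e @ [b]) ms
      \<and> apply_seq (replicate m e @ [b]) ms = P @ [b]"
    using legal_seq_extend by (simp add: odd_walk_def)
  have "legal_move (replicate m e @ [c]) m b"
    using assms(2,4) e by (auto simp: legal_move_def nth_append)
  moreover have "do_move (replicate m e @ [c]) (m, b) = replicate m e @ [b]"
    by (simp add: do_move_def list_update_append)
  moreover have "odd (length (tower_moves m c e) + 1 + length ms)"
    using length_tower_moves[of m c e] walk \<open>0 < m\<close> by (simp add: odd_walk_def)
  moreover have "no_consecutive_same_disk (tower_moves m c e @ (m, b) # ms)"
  proof (rule no_consecutive_same_disk_around_larger)
    show "\<forall>x \<in> set (tower_moves m c e). fst x < m" using tower_moves_disk_less by blast
    show "\<forall>x \<in> set ms. fst x < m"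
      using walk legal_seq_disk_less[of "replicate m e" ms] by (simp add: odd_walk_def)
  qed (use walk no_consecutive_same_disk_tower_moves in \<open>simp_all add: odd_walk_def\<close>)
  ultimately show ?thesis using transfer rest
    by (simp add: odd_walk_def legal_seq_append apply_seq_append e_def[symmetric])
qed

text \<open>One disk is not a valid base: it cannot return to its peg after an odd number of moves.\<close>

lemma odd_walk_two_disks:
  assumes "c \<in> {1, 2, 3}" "x \<in> {1, 2, 3}" "y \<in> {1, 2, 3}"
  shows "\<exists>ms. odd_walk [c, c] ms [x, y]"
proof (cases "y = c")
  case True
  obtain a where a: "a \<in> {1, 2, 3}" "a \<noteq> c"
    by (rule that[of "if c = 1 then 2 else 1"]) simp_all
  define b where "b = third_peg c a"
  have b: "b \<in> {1, 2, 3}" "b \<noteq> c" "b \<noteq> a"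
    using third_peg[OF assms(1) a(1) a(2)[symmetric]] unfolding b_def by simp_all
  have "x \<noteq> c \<Longrightarrow> odd_walk [c, c] [(0, x)] [x, c]"
    using assms by (simp add: odd_walk_def legal_move_def do_move_def no_consecutive_same_disk_iff)
  moreover have "odd_walk [c, c] [(0, a), (1, b), (0, c), (1, a), (0, b), (1, c), (0, c)] [c, c]"
    using assms a b by (simp add: odd_walk_def legal_move_def do_move_def no_consecutive_same_disk_iff)
  ultimately show ?thesis using True by blast
next
  case False
  define e where "e = third_peg c y"
  have e: "e \<in> {1, 2, 3}" "e \<noteq> c" "e \<noteq> y"
    using third_peg[OF assms(1,3)] False unfolding e_def by simp_all
  have "x \<noteq> e \<Longrightarrow> odd_walk [c, c] [(0, e), (1, y), (0, x)] [x, y]"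
    using assms e False by (simp add: odd_walk_def legal_move_def do_move_def no_consecutive_same_disk_iff)
  moreover have "odd_walk [c, c] [(0, y), (1, e), (0, c), (1, y), (0, e)] [e, y]"
    using assms e False by (simp add: odd_walk_def legal_move_def do_move_def no_consecutive_same_disk_iff)
  ultimately show ?thesis by blast
qed

lemma odd_walk_from_tower:
  assumes "2 \<le> n" "c \<in> {1, 2, 3}" "hanoi_pos n P"
  shows "\<exists>ms. odd_walk (replicate n c) ms P"
  using assms
proof (induction n arbitrary: c P rule: nat_induct_at_least)
  case base
  then obtain x y where "P = [x, y]" "x \<in> {1, 2, 3}" "y \<in> {1, 2, 3}"
    by (auto simp: hanoi_pos_def length_Suc_conv numeral_2_eq_2)
  then show ?case using odd_walk_two_disks base.prems by (simp add: numeral_2_eq_2)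
next
  case (Suc m)
  obtain P' b where P: "P = P' @ [b]"
    using Suc.prems(2) by (metis hanoi_pos_def length_Suc_conv_rev)
  with Suc.prems(2) have "hanoi_pos m P'" and b: "b \<in> {1, 2, 3}"
    by (auto simp: hanoi_pos_def)
  then have walks: "\<exists>ms. odd_walk (replicate m e) ms P'" if "e \<in> {1, 2, 3}" for e
    using Suc.IH that by blast
  have tower: "replicate (Suc m) c = replicate m c @ [c]" by (simp add: replicate_append_same)
  show ?case
  proof (cases "b = c")
    case True
    then show ?thesis using walks[OF Suc.prems(1)] odd_walk_extend unfolding tower P by blast
  next
    case False
    then obtain ms where "odd_walk (replicate m (third_peg c b)) ms P'"
      using walks third_peg(1)[OF Suc.prems(1) b] by blast
    moreover have "0 < m" using Suc.hyps by simp
    ultimately show ?thesis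
      using odd_walk_via_third_peg[OF _ b Suc.prems(1) False] unfolding tower P by blast
  qed
qed

theorem theorem1:
  fixes n :: nat and P :: "nat list"
  assumes "n \<ge> 2" and "hanoi_pos n P"
  shows "\<exists>ms. odd (length ms) \<and> legal_seq (initial_pos n) ms
            \<and> no_consecutive_same_disk ms \<and> apply_seq (initial_pos n) ms = P"
  using odd_walk_from_tower[OF assms(1) _ assms(2), of 1]
  by (simp add: initial_pos_def odd_walk_def)

end
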